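(* Let $\mathcal{X}\subseteq\mathbb{R}^d$, let $\mathcal{D}$ be any distribution over pairs $(x,y)$ with $x\in\mathcal{X}$ and $y\in\{1,\dots,k\}$, and let $h:\mathcal{X}\to\{-1,1\}$ be any hypothesis. Let $\pi_i=P(y=i)$, and define \[ J(h)=2\sum_{i=1}^k \pi_i\,\bigl|P(h(x)>0)-P(h(x)>0\mid i)\bigr|. \] Then $J(h)\in[0,1]$. Furthermore, $J(h)=1$ if and only if $h$ induces a partition that is both maximally pure and maximally balanced, i.e. $\alpha=0$ and $\beta=1/2$, where $\alpha=\sum_{i=1}^k\pi_i\min\bigl(P(h(x)>0\mid i),P(h(x)<0\mid i)\bigr)$ and $\beta=P(h(x)>0)$.
   Context: $P(h(x)>0\mid i)$ denotes the probability that $h(x)>0$ conditional on the label being $i$. The quantity $\alpha$ is called the purity factor and $\beta$ the balancing factor. A partition is maximally pure if $\alpha=0$, meaning each class is sent exclusively to one side. It is maximally balanced if $\beta=1/2$. *)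

theory Defs
  imports "HOL-Probability.Probability"
begin

definition class_prob :: "((real^'d) \<times> nat) measure \<Rightarrow> nat \<Rightarrow> real" where
  "class_prob M i = measure M {p \<in> space M. snd p = i}"

definition pos_prob :: "((real^'d) \<times> nat) measure \<Rightarrow> (real^'d \<Rightarrow> real) \<Rightarrow> real" where
  "pos_prob M h = measure M {p \<in> space M. h (fst p) > 0}"

text \<open>P(h(x) > 0 | y = i) (elementary conditional probability; 0 if P(y=i)=0,
  in which case it is multiplied by pi_i = 0 everywhere it occurs)\<close>
definition cond_pos :: "((real^'d) \<times> nat) measure \<Rightarrow> (real^'d \<Rightarrow> real) \<Rightarrow> nat \<Rightarrow> real" where
  "cond_pos M h i = measure M {p \<in> space M. h (fst p) > 0 \<and> snd p = i} / class_prob M i"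

definition cond_neg :: "((real^'d) \<times> nat) measure \<Rightarrow> (real^'d \<Rightarrow> real) \<Rightarrow> nat \<Rightarrow> real" where
  "cond_neg M h i = measure M {p \<in> space M. h (fst p) < 0 \<and> snd p = i} / class_prob M i"

definition J_obj :: "((real^'d) \<times> nat) measure \<Rightarrow> (real^'d \<Rightarrow> real) \<Rightarrow> nat \<Rightarrow> real" where
  "J_obj M h k = 2 * (\<Sum>i=1..k. class_prob M i * \<bar>pos_prob M h - cond_pos M h i\<bar>)"

definition purity :: "((real^'d) \<times> nat) measure \<Rightarrow> (real^'d \<Rightarrow> real) \<Rightarrow> nat \<Rightarrow> real" where
  "purity M h k = (\<Sum>i=1..k. class_prob M i * min (cond_pos M h i) (cond_neg M h i))"

definition balance :: "((real^'d) \<times> nat) measure \<Rightarrow> (real^'d \<Rightarrow> real) \<Rightarrow> real" where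
  "balance M h = pos_prob M h"

end

theory Submission
  imports Defs
begin

text \<open>Write \<open>a\<^sub>i = P(h(x) > 0, y = i)\<close>, so that \<open>\<Sum>\<^sub>i \<pi>\<^sub>i = 1\<close>, \<open>\<Sum>\<^sub>i a\<^sub>i = \<beta>\<close> and
  \<open>J = 2 \<Sum>\<^sub>i \<bar>\<beta> \<pi>\<^sub>i - a\<^sub>i\<bar>\<close>. Splitting \<open>\<beta> \<pi>\<^sub>i - a\<^sub>i = \<beta> (\<pi>\<^sub>i - a\<^sub>i) - (1 - \<beta>) a\<^sub>i\<close> into two
  nonnegative parts and using \<open>\<bar>u - v\<bar> = u + v - 2 min u v\<close> gives
  \<open>J = 4 \<beta> (1 - \<beta>) - 4 \<Sum>\<^sub>i min (\<beta> (\<pi>\<^sub>i - a\<^sub>i)) ((1 - \<beta>) a\<^sub>i)\<close>.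
  Both terms are bounded by the obvious estimates, so \<open>J \<le> 1\<close>, with equality iff \<open>\<beta> = 1/2\<close>
  and the sum of minima, which is then \<open>\<alpha>/2\<close>, vanishes.\<close>

lemma sum_abs_scaled_gap_eq:
  fixes p a :: "'i \<Rightarrow> real" and \<beta> :: real
  assumes "(\<Sum>i\<in>I. p i) = 1" and "(\<Sum>i\<in>I. a i) = \<beta>"
  shows "(\<Sum>i\<in>I. \<bar>\<beta> * p i - a i\<bar>) =
           2 * \<beta> * (1 - \<beta>) - 2 * (\<Sum>i\<in>I. min (\<beta> * (p i - a i)) ((1 - \<beta>) * a i))"
proof -
  have "(\<Sum>i\<in>I. \<bar>\<beta> * p i - a i\<bar>) =
        (\<Sum>i\<in>I. \<beta> * p i + (1 - 2 * \<beta>) * a i - 2 * min (\<beta> * (p i - a i)) ((1 - \<beta>) * a i))"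
    by (intro sum.cong refl) (simp add: min_def abs_if algebra_simps)
  also have "\<dots> = \<beta> * (\<Sum>i\<in>I. p i) + (1 - 2 * \<beta>) * (\<Sum>i\<in>I. a i)
      - 2 * (\<Sum>i\<in>I. min (\<beta> * (p i - a i)) ((1 - \<beta>) * a i))"
    by (simp add: sum.distrib sum_subtractf sum_distrib_left)
  finally show ?thesis using assms by (simp add: algebra_simps)
qed

lemma scaled_gap_sum_range_and_maximum:
  fixes p a :: "'i \<Rightarrow> real" and \<beta> :: real
  assumes bounds: "\<And>i. i \<in> I \<Longrightarrow> 0 \<le> a i \<and> a i \<le> p i"
    and "(\<Sum>i\<in>I. p i) = 1" and "(\<Sum>i\<in>I. a i) = \<beta>"
  defines "J \<equiv> 2 * (\<Sum>i\<in>I. \<bar>\<beta> * p i - a i\<bar>)"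
  shows "J \<in> {0..1} \<and> (J = 1 \<longleftrightarrow> (\<Sum>i\<in>I. min (a i) (p i - a i)) = 0 \<and> \<beta> = 1/2)"
proof -
  define m where "m = (\<Sum>i\<in>I. min (\<beta> * (p i - a i)) ((1 - \<beta>) * a i))"
  have "0 \<le> \<beta>" using assms(3) bounds by (metis sum_nonneg)
  moreover have "\<beta> \<le> 1" using assms(2,3) bounds by (metis sum_mono)
  ultimately have "0 \<le> m" unfolding m_def using bounds by (intro sum_nonneg) simp
  have J_eq: "J = 4 * \<beta> * (1 - \<beta>) - 4 * m"
    unfolding J_def m_def sum_abs_scaled_gap_eq[OF assms(2,3)] by simp
  have quad: "4 * \<beta> * (1 - \<beta>) = 1 - (2 * \<beta> - 1)\<^sup>2"
    by (simp add: power2_eq_square algebra_simps)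
  have J_max: "J = 1 \<longleftrightarrow> (2 * \<beta> - 1)\<^sup>2 + 4 * m = 0" using J_eq quad by auto
  have "0 \<le> J" by (simp add: J_def sum_nonneg)
  moreover have "J \<le> 1" using J_eq quad \<open>0 \<le> m\<close> zero_le_power2[of "2 * \<beta> - 1"] by linarith
  moreover have "m = (\<Sum>i\<in>I. min (a i) (p i - a i)) / 2" if "\<beta> = 1/2"
    unfolding m_def that sum_divide_distrib by (intro sum.cong refl) (simp add: min_def)
  moreover have "J = 1 \<longleftrightarrow> m = 0 \<and> \<beta> = 1/2"
    using J_max \<open>0 \<le> m\<close> by (auto simp: add_nonneg_eq_0_iff)
  ultimately show ?thesis by auto
qed

lemma (in finite_measure) sum_measure_label_slices:
  assumes "finite I" and "AE x in M. f x \<in> I"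
    and [measurable]: "f \<in> M \<rightarrow>\<^sub>M count_space UNIV" "{x \<in> space M. P x} \<in> sets M"
  shows "(\<Sum>i\<in>I. measure M {x \<in> space M. P x \<and> f x = i}) = measure M {x \<in> space M. P x}"
proof -
  have [measurable]: "{x \<in> space M. P x \<and> f x = i} \<in> sets M" for i by measurable
  have "(\<Sum>i\<in>I. measure M {x \<in> space M. P x \<and> f x = i}) =
        measure M (\<Union>i\<in>I. {x \<in> space M. P x \<and> f x = i})"
    using assms(1) by (subst finite_measure_finite_Union) (auto simp: disjoint_family_on_def)
  also have "\<dots> = measure M {x \<in> space M. P x}"
    using assms(1) by (intro measure_eq_AE) (use assms(2) in \<open>eventually_elim, auto\<close>)
  finally show ?thesis .
qed

lemma (in finite_measure) measure_split_AE_complement: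
  assumes [measurable]: "{x \<in> space M. P x} \<in> sets M" "{x \<in> space M. Q x} \<in> sets M"
      "{x \<in> space M. C x} \<in> sets M"
    and "AE x in M. Q x \<longleftrightarrow> \<not> P x"
  shows "measure M {x \<in> space M. P x \<and> C x} + measure M {x \<in> space M. Q x \<and> C x} =
         measure M {x \<in> space M. C x}"
proof -
  have "measure M {x \<in> space M. P x \<and> C x} + measure M {x \<in> space M. Q x \<and> C x} =
        measure M ({x \<in> space M. P x \<and> C x} \<union> {x \<in> space M. Q x \<and> C x})"
    by (rule measure_Un_AE[symmetric]) (use assms(4) in \<open>auto simp: fmeasurable_eq_sets elim: eventually_mono\<close>)
  also have "\<dots> = measure M {x \<in> space M. C x}"
    by (rule measure_eq_AE) (use assms(4) in \<open>eventually_elim, auto\<close>)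
  finally show ?thesis .
qed

theorem lemma1:
  fixes M :: "((real^'d) \<times> nat) measure"
    and X :: "(real^'d) set"
    and h :: "real^'d \<Rightarrow> real"
    and k :: nat
  assumes "prob_space M"
    and "AE p in M. fst p \<in> X \<and> snd p \<in> {1..k}"
    and "\<And>x. x \<in> X \<Longrightarrow> h x \<in> {-1, 1}"
    and "(\<lambda>p. h (fst p)) \<in> M \<rightarrow>\<^sub>M borel"
    and "snd \<in> M \<rightarrow>\<^sub>M count_space UNIV"
  shows "J_obj M h k \<in> {0..1} \<and>
         (J_obj M h k = 1 \<longleftrightarrow> purity M h k = 0 \<and> balance M h = 1/2)"
proof -
  interpret prob_space M by fact
  note [measurable] = assms(4,5)
  define a where "a i = measure M {p \<in> space M. h (fst p) > 0 \<and> snd p = i}" for i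
  define b where "b i = measure M {p \<in> space M. h (fst p) < 0 \<and> snd p = i}" for i
  have labels: "AE p in M. snd p \<in> {1..k}" using assms(2) by auto
  have sign: "AE p in M. h (fst p) < 0 \<longleftrightarrow> \<not> h (fst p) > 0"
    using assms(2) by eventually_elim (use assms(3) in force)
  have split: "a i + b i = class_prob M i" for i
    unfolding a_def b_def class_prob_def by (rule measure_split_AE_complement[OF _ _ _ sign]) auto
  have class_sum: "(\<Sum>i\<in>{1..k}. class_prob M i) = 1"
    using sum_measure_label_slices[OF _ labels, of "\<lambda>_. True"] by (simp add: class_prob_def prob_space)
  have pos_sum: "(\<Sum>i\<in>{1..k}. a i) = pos_prob M h"
    using sum_measure_label_slices[OF _ labels, of "\<lambda>p. h (fst p) > 0"] by (simp add: a_def pos_prob_def)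
  have nonneg: "0 \<le> a i" "0 \<le> b i" for i by (simp_all add: a_def b_def)
  \<comment> \<open>\<open>a i\<close> and \<open>b i\<close> vanish with \<open>class_prob M i\<close>, so the junk value \<open>x / 0 = 0\<close> in the conditional probabilities is harmless\<close>
  have bounds: "0 \<le> a i \<and> a i \<le> class_prob M i" and
      cancel: "class_prob M i * (a i / class_prob M i) = a i"
              "class_prob M i * (b i / class_prob M i) = b i" for i
    using split[of i] nonneg[of i] by auto
  have "J_obj M h k = 2 * (\<Sum>i\<in>{1..k}. \<bar>pos_prob M h * class_prob M i - a i\<bar>)"
    unfolding J_obj_def cond_pos_def a_def[symmetric]
    by (intro arg_cong[where f = "(*) 2"] sum.cong refl)
       (metis cancel(1) abs_mult abs_of_nonneg bounds order.trans right_diff_distrib mult.commute)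
  moreover have "purity M h k = (\<Sum>i\<in>{1..k}. min (a i) (class_prob M i - a i))"
    unfolding purity_def cond_pos_def cond_neg_def a_def[symmetric] b_def[symmetric]
    by (intro sum.cong refl)
       (metis cancel min_mult_distrib_left bounds order.trans split add_diff_cancel_left')
  ultimately show ?thesis
    using scaled_gap_sum_range_and_maximum[OF _ class_sum pos_sum] bounds
    by (simp add: balance_def)
qed

end
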